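(* Let $\mathcal{H}$ be a separable Hilbert space, $\{\mathcal{H}_j\}_{j\in J}$ ($J\subseteq\mathbb{Z}$) a sequence of closed subspaces of $\mathcal{H}$, $K\in\mathcal{B}(\mathcal{H})$, and $\Lambda_j\in\mathcal{B}(\mathcal{H},\mathcal{H}_j)$ for each $j\in J$. For each $j\in J$ let $\{\mathcal{H}_{ij}\}_{i\in I_j}$ be a sequence of closed subspaces of $\mathcal{H}_j$, and let $\{\Gamma_{ij}\in\mathcal{B}(\mathcal{H}_j,\mathcal{H}_{ij})\}_{i\in I_j}$ be a $g$-frame for $\mathcal{H}_j$ with bounds $C_j,D_j$, such that $0<C=\inf_{j\in J}C_j\leq\sup_{j\in J}D_j=D<\infty$. Then the following are equivalent: (i) $\{\Lambda_j\}_{j\in J}$ is a $K$-$g$-frame for $\mathcal{H}$; (ii) $\{\Gamma_{ij}\Lambda_j\in\mathcal{B}(\mathcal{H},\mathcal{H}_{ij}): i\in I_j, j\in J\}$ is a $K$-$g$-frame for $\mathcal{H}$.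
   Context: A family $\{\Lambda_j\in\mathcal{B}(\mathcal{H},\mathcal{V}_j)\}_{j}$ is a $K$-$g$-frame for $\mathcal{H}$ (with respect to the spaces $\mathcal{V}_j$) if there exist $0<A\leq B<\infty$ with $A\|K^{\ast}f\|^2\leq\sum_{j}\|\Lambda_jf\|^2\leq B\|f\|^2$ for all $f\in\mathcal{H}$. A family $\{\Gamma_i\in\mathcal{B}(\mathcal{W},\mathcal{W}_i)\}_i$ is a $g$-frame for a Hilbert space $\mathcal{W}$ with bounds $C,D$ ($0<C\leq D<\infty$) if $C\|g\|^2\leq\sum_i\|\Gamma_ig\|^2\leq D\|g\|^2$ for all $g\in\mathcal{W}$. *)

theory Defs
  imports "HOL-Analysis.Analysis"
begin

definition closed_subspace :: "'a::real_normed_vector set \<Rightarrow> bool" where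
  "closed_subspace S \<longleftrightarrow> subspace S \<and> closed S"

definition bounded_linear_on :: "'a::real_normed_vector set \<Rightarrow> ('a \<Rightarrow> 'b::real_normed_vector) \<Rightarrow> bool" where
  "bounded_linear_on S f \<longleftrightarrow>
     (\<forall>x\<in>S. \<forall>y\<in>S. f (x + y) = f x + f y) \<and>
     (\<forall>c. \<forall>x\<in>S. f (c *\<^sub>R x) = c *\<^sub>R f x) \<and>
     (\<exists>M. \<forall>x\<in>S. norm (f x) \<le> M * norm x)"

definition K_g_frame ::
  "('a::{real_inner,complete_space} \<Rightarrow> 'a) \<Rightarrow> ('i \<Rightarrow> 'a \<Rightarrow> 'a) \<Rightarrow> 'i set \<Rightarrow> bool" where
  "K_g_frame K L J \<longleftrightarrow>
     (\<exists>A B. 0 < A \<and> A \<le> B \<and>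
        (\<forall>f. (\<lambda>j. (norm (L j f))\<^sup>2) summable_on J \<and>
             A * (norm (adjoint K f))\<^sup>2 \<le> (\<Sum>\<^sub>\<infinity>j\<in>J. (norm (L j f))\<^sup>2) \<and>
             (\<Sum>\<^sub>\<infinity>j\<in>J. (norm (L j f))\<^sup>2) \<le> B * (norm f)\<^sup>2))"

definition g_frame_bounds ::
  "'a::{real_inner,complete_space} set \<Rightarrow> ('i \<Rightarrow> 'a \<Rightarrow> 'a) \<Rightarrow> 'i set \<Rightarrow> real \<Rightarrow> real \<Rightarrow> bool" where
  "g_frame_bounds W G I C D \<longleftrightarrow>
     0 < C \<and> C \<le> D \<and>
     (\<forall>g\<in>W. (\<lambda>i. (norm (G i g))\<^sup>2) summable_on I \<and>
             C * (norm g)\<^sup>2 \<le> (\<Sum>\<^sub>\<infinity>i\<in>I. (norm (G i g))\<^sup>2) \<and>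
             (\<Sum>\<^sub>\<infinity>i\<in>I. (norm (G i g))\<^sup>2) \<le> D * (norm g)\<^sup>2)"

end

theory Submission
  imports Defs
begin

text \<open>Applying the inner g-frame \<open>{\<Gamma>\<^sub>i\<^sub>j}\<^sub>i\<close> to \<open>\<Lambda>\<^sub>j f\<close> shows that the j-th block
  \<open>\<Sum>\<^sub>i \<parallel>\<Gamma>\<^sub>i\<^sub>j \<Lambda>\<^sub>j f\<parallel>\<^sup>2\<close> of the composed family lies between \<open>C \<parallel>\<Lambda>\<^sub>j f\<parallel>\<^sup>2\<close> and \<open>D \<parallel>\<Lambda>\<^sub>j f\<parallel>\<^sup>2\<close>,
  uniformly in j. A K-g-frame condition depends on the numbers \<open>\<parallel>\<Lambda>\<^sub>j f\<parallel>\<^sup>2\<close> only through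
  their sum, so it survives replacing them by uniformly comparable nonnegative numbers; and as
  all terms are nonnegative, the double series over \<open>(j, i)\<close> may be summed block by block.\<close>

definition K_frame_energy :: "('a::{real_inner,complete_space} \<Rightarrow> 'a) \<Rightarrow> ('a \<Rightarrow> 'i \<Rightarrow> real) \<Rightarrow> 'i set \<Rightarrow> bool" where
  "K_frame_energy K e J \<longleftrightarrow>
     (\<exists>A B. 0 < A \<and> A \<le> B \<and>
        (\<forall>f. e f summable_on J \<and>
             A * (norm (adjoint K f))\<^sup>2 \<le> (\<Sum>\<^sub>\<infinity>j\<in>J. e f j) \<and>
             (\<Sum>\<^sub>\<infinity>j\<in>J. e f j) \<le> B * (norm f)\<^sup>2))"

lemma K_g_frame_iff_K_frame_energy:
  "K_g_frame K L J \<longleftrightarrow> K_frame_energy K (\<lambda>f j. (norm (L j f))\<^sup>2) J"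
  by (simp add: K_g_frame_def K_frame_energy_def)

lemma summable_on_comparable:
  fixes e e' :: "'i \<Rightarrow> real"
  assumes "e summable_on J"
    and "\<And>j. j \<in> J \<Longrightarrow> 0 \<le> e' j"
    and "\<And>j. j \<in> J \<Longrightarrow> c * e j \<le> e' j"
    and "\<And>j. j \<in> J \<Longrightarrow> e' j \<le> D * e j"
  shows "e' summable_on J"
    and "c * (\<Sum>\<^sub>\<infinity>j\<in>J. e j) \<le> (\<Sum>\<^sub>\<infinity>j\<in>J. e' j)"
    and "(\<Sum>\<^sub>\<infinity>j\<in>J. e' j) \<le> D * (\<Sum>\<^sub>\<infinity>j\<in>J. e j)"
proof -
  have ce: "(\<lambda>j. c * e j) summable_on J" and De: "(\<lambda>j. D * e j) summable_on J"
    using assms(1) by (auto intro: summable_on_cmult_right)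
  show e': "e' summable_on J"
    using summable_on_comparison_test[OF De] assms(2,4) by blast
  show "c * (\<Sum>\<^sub>\<infinity>j\<in>J. e j) \<le> (\<Sum>\<^sub>\<infinity>j\<in>J. e' j)"
    using infsum_mono[OF ce e'] assms(3) by (simp add: infsum_cmult_right')
  show "(\<Sum>\<^sub>\<infinity>j\<in>J. e' j) \<le> D * (\<Sum>\<^sub>\<infinity>j\<in>J. e j)"
    using infsum_mono[OF e' De] assms(4) by (simp add: infsum_cmult_right')
qed

lemma K_frame_energy_comparable:
  assumes frame: "K_frame_energy K e J"
    and "0 < c" "c \<le> D"
    and "\<And>f j. j \<in> J \<Longrightarrow> 0 \<le> e' f j"
    and "\<And>f j. j \<in> J \<Longrightarrow> c * e f j \<le> e' f j"
    and "\<And>f j. j \<in> J \<Longrightarrow> e' f j \<le> D * e f j"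
  shows "K_frame_energy K e' J"
proof -
  obtain A B where AB: "0 < A" "A \<le> B"
    and bounds: "\<And>f. e f summable_on J \<and>
         A * (norm (adjoint K f))\<^sup>2 \<le> (\<Sum>\<^sub>\<infinity>j\<in>J. e f j) \<and> (\<Sum>\<^sub>\<infinity>j\<in>J. e f j) \<le> B * (norm f)\<^sup>2"
    using frame unfolding K_frame_energy_def by blast
  have "e' f summable_on J \<and>
        c * A * (norm (adjoint K f))\<^sup>2 \<le> (\<Sum>\<^sub>\<infinity>j\<in>J. e' f j) \<and>
        (\<Sum>\<^sub>\<infinity>j\<in>J. e' f j) \<le> max (c * A) (D * B) * (norm f)\<^sup>2" for f
  proof -
    note cmp = summable_on_comparable[of "e f" J "e' f" c D]
    have "c * A * (norm (adjoint K f))\<^sup>2 \<le> c * (\<Sum>\<^sub>\<infinity>j\<in>J. e f j)"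
      using bounds[of f] \<open>0 < c\<close> by (simp add: mult.assoc)
    also have "\<dots> \<le> (\<Sum>\<^sub>\<infinity>j\<in>J. e' f j)"
      using cmp bounds assms by blast
    finally have lower: "c * A * (norm (adjoint K f))\<^sup>2 \<le> (\<Sum>\<^sub>\<infinity>j\<in>J. e' f j)" .
    have "(\<Sum>\<^sub>\<infinity>j\<in>J. e' f j) \<le> D * (\<Sum>\<^sub>\<infinity>j\<in>J. e f j)"
      using cmp bounds assms by blast
    also have "\<dots> \<le> D * B * (norm f)\<^sup>2"
      using bounds[of f] assms(2,3) by (simp add: mult.assoc)
    also have "\<dots> \<le> max (c * A) (D * B) * (norm f)\<^sup>2"
      by (simp add: mult_right_mono)
    finally show ?thesis
      using lower cmp bounds assms by blast
  qed
  moreover have "0 < c * A"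
    using \<open>0 < c\<close> AB by simp
  ultimately show ?thesis
    unfolding K_frame_energy_def by (intro exI[of _ "c * A"] exI[of _ "max (c * A) (D * B)"]) auto
qed

lemma K_frame_energy_comparable_iff:
  assumes "0 < c" "c \<le> D"
    and "\<And>f j. j \<in> J \<Longrightarrow> 0 \<le> e f j"
    and "\<And>f j. j \<in> J \<Longrightarrow> c * e f j \<le> e' f j"
    and "\<And>f j. j \<in> J \<Longrightarrow> e' f j \<le> D * e f j"
  shows "K_frame_energy K e' J \<longleftrightarrow> K_frame_energy K e J"
proof
  assume "K_frame_energy K e' J"
  moreover have "0 < 1 / D" "1 / D \<le> 1 / c"
    using assms(1,2) by (auto simp: frac_le)
  moreover note assms(3)
  moreover have "(1 / D) * e' f j \<le> e f j" "e f j \<le> (1 / c) * e' f j" if "j \<in> J" for f j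
    using assms(1,2) assms(4,5)[OF that] by (auto simp: field_simps)
  ultimately show "K_frame_energy K e J"
    by (rule K_frame_energy_comparable)
next
  assume "K_frame_energy K e J"
  moreover have "0 \<le> e' f j" if "j \<in> J" for f j
    using assms(1) assms(3,4)[OF that] by (meson order_trans mult_nonneg_nonneg less_imp_le)
  ultimately show "K_frame_energy K e' J"
    using K_frame_energy_comparable assms(1,2,4,5) by blast
qed

lemma summable_on_Sigma_nonneg_iff:
  fixes g :: "'a \<times> 'b \<Rightarrow> real"
  assumes "\<And>x. x \<in> A \<Longrightarrow> (\<lambda>y. g (x, y)) summable_on B x"
    and "\<And>x y. x \<in> A \<Longrightarrow> y \<in> B x \<Longrightarrow> 0 \<le> g (x, y)"
  shows "g summable_on Sigma A B \<longleftrightarrow> (\<lambda>x. \<Sum>\<^sub>\<infinity>y\<in>B x. g (x, y)) summable_on A"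
proof
  show "(\<lambda>x. \<Sum>\<^sub>\<infinity>y\<in>B x. g (x, y)) summable_on A" if "g summable_on Sigma A B"
    using summable_on_SigmaD[OF that] assms(1) .
  show "g summable_on Sigma A B" if "(\<lambda>x. \<Sum>\<^sub>\<infinity>y\<in>B x. g (x, y)) summable_on A"
    using assms by (intro summable_on_SigmaI[OF _ that]) auto
qed

lemma K_g_frame_Sigma_iff:
  assumes "\<And>j f. j \<in> J \<Longrightarrow> (\<lambda>i. (norm (M j i f))\<^sup>2) summable_on I j"
  shows "K_g_frame K (\<lambda>(j, i). M j i) (SIGMA j:J. I j) \<longleftrightarrow>
         K_frame_energy K (\<lambda>f j. \<Sum>\<^sub>\<infinity>i\<in>I j. (norm (M j i f))\<^sup>2) J"
proof -
  define g where "g f = (\<lambda>(j, i). (norm (M j i f))\<^sup>2)" for f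
  define s where "s f = (\<lambda>j. \<Sum>\<^sub>\<infinity>i\<in>I j. (norm (M j i f))\<^sup>2)" for f
  have summable_iff: "g f summable_on (SIGMA j:J. I j) \<longleftrightarrow> s f summable_on J" for f
    using summable_on_Sigma_nonneg_iff[of J "g f" I] assms by (simp add: g_def s_def)
  have regroup: "(\<Sum>\<^sub>\<infinity>p\<in>(SIGMA j:J. I j). g f p) = (\<Sum>\<^sub>\<infinity>j\<in>J. s f j)"
    if "g f summable_on (SIGMA j:J. I j)" for f
    using infsum_Sigma_banach[OF that] by (simp add: g_def s_def)
  have "g f summable_on (SIGMA j:J. I j) \<and> a \<le> (\<Sum>\<^sub>\<infinity>p\<in>(SIGMA j:J. I j). g f p) \<and>
          (\<Sum>\<^sub>\<infinity>p\<in>(SIGMA j:J. I j). g f p) \<le> b \<longleftrightarrow>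
        s f summable_on J \<and> a \<le> (\<Sum>\<^sub>\<infinity>j\<in>J. s f j) \<and> (\<Sum>\<^sub>\<infinity>j\<in>J. s f j) \<le> b" for f a b
    using summable_iff regroup by metis
  moreover have "(\<lambda>p. (norm ((case p of (j, i) \<Rightarrow> M j i) f))\<^sup>2) = g f" for f
    by (auto simp: g_def fun_eq_iff)
  ultimately show ?thesis
    unfolding K_g_frame_def K_frame_energy_def s_def[symmetric] by simp
qed

lemma g_frame_bounds_mono:
  assumes "g_frame_bounds W G I C D" "0 < C'" "C' \<le> C" "D \<le> D'"
  shows "g_frame_bounds W G I C' D'"
proof -
  have "C' * (norm g)\<^sup>2 \<le> C * (norm g)\<^sup>2" "D * (norm g)\<^sup>2 \<le> D' * (norm g)\<^sup>2" for g :: 'a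
    using assms(3,4) by (simp_all add: mult_right_mono)
  then show ?thesis
    using assms unfolding g_frame_bounds_def by (meson order_trans)
qed

theorem mainTheorem3:
  fixes K :: "'a::{real_inner,complete_space} \<Rightarrow> 'a"
    and J :: "int set"
    and HH :: "int \<Rightarrow> 'a set"
    and Lam :: "int \<Rightarrow> 'a \<Rightarrow> 'a"
    and I :: "int \<Rightarrow> nat set"
    and HHs :: "int \<Rightarrow> nat \<Rightarrow> 'a set"
    and Gam :: "int \<Rightarrow> nat \<Rightarrow> 'a \<Rightarrow> 'a"
    and Cb Db :: "int \<Rightarrow> real"
  assumes separable: "\<exists>D::'a set. countable D \<and> closure D = UNIV"
    and K_bl: "bounded_linear K"
    and HH_cs: "\<And>j. j \<in> J \<Longrightarrow> closed_subspace (HH j)"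
    and Lam_bl: "\<And>j. j \<in> J \<Longrightarrow> bounded_linear (Lam j)"
    and Lam_range: "\<And>j. j \<in> J \<Longrightarrow> range (Lam j) \<subseteq> HH j"
    and HHs_cs: "\<And>j i. j \<in> J \<Longrightarrow> i \<in> I j \<Longrightarrow> closed_subspace (HHs j i) \<and> HHs j i \<subseteq> HH j"
    and Gam_bl: "\<And>j i. j \<in> J \<Longrightarrow> i \<in> I j \<Longrightarrow> bounded_linear_on (HH j) (Gam j i)"
    and Gam_range: "\<And>j i. j \<in> J \<Longrightarrow> i \<in> I j \<Longrightarrow> Gam j i ` HH j \<subseteq> HHs j i"
    and Gam_frame: "\<And>j. j \<in> J \<Longrightarrow> g_frame_bounds (HH j) (Gam j) (I j) (Cb j) (Db j)"
    and C_pos: "\<exists>c>0. \<forall>j\<in>J. c \<le> Cb j"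
    and D_fin: "bdd_above (Db ` J)"
  shows "K_g_frame K Lam J \<longleftrightarrow>
         K_g_frame K (\<lambda>(j, i). Gam j i \<circ> Lam j) (SIGMA j:J. I j)"
proof -
  obtain c where c: "0 < c" "\<And>j. j \<in> J \<Longrightarrow> c \<le> Cb j"
    using C_pos by blast
  obtain D where D: "c \<le> D" "\<And>j. j \<in> J \<Longrightarrow> Db j \<le> D"
    using D_fin unfolding bdd_above_def by (metis image_eqI max.cobounded2 max.coboundedI1)
  have uniform: "g_frame_bounds (HH j) (Gam j) (I j) c D" if "j \<in> J" for j
    using g_frame_bounds_mono[OF Gam_frame] c D that by blast
  have block: "(\<lambda>i. (norm ((Gam j i \<circ> Lam j) f))\<^sup>2) summable_on I j \<and>
      c * (norm (Lam j f))\<^sup>2 \<le> (\<Sum>\<^sub>\<infinity>i\<in>I j. (norm ((Gam j i \<circ> Lam j) f))\<^sup>2) \<and>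
      (\<Sum>\<^sub>\<infinity>i\<in>I j. (norm ((Gam j i \<circ> Lam j) f))\<^sup>2) \<le> D * (norm (Lam j f))\<^sup>2" if "j \<in> J" for j f
    using uniform[OF that] Lam_range[OF that] unfolding g_frame_bounds_def by auto
  have "K_g_frame K (\<lambda>(j, i). Gam j i \<circ> Lam j) (SIGMA j:J. I j) \<longleftrightarrow>
        K_frame_energy K (\<lambda>f j. \<Sum>\<^sub>\<infinity>i\<in>I j. (norm ((Gam j i \<circ> Lam j) f))\<^sup>2) J"
    using block by (intro K_g_frame_Sigma_iff) blast
  also have "\<dots> \<longleftrightarrow> K_frame_energy K (\<lambda>f j. (norm (Lam j f))\<^sup>2) J"
    using c(1) D(1) block by (intro K_frame_energy_comparable_iff) auto
  finally show ?thesis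
    by (simp add: K_g_frame_iff_K_frame_energy)
qed

end
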